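(* Let $A$ be a finite set and let $\le_E$ be the ordering on $A^*$ defined below. Then: (1) $(A^*, \le_E)$ has no descending chain and no antichain. (2) $(U(A^*, \le_E), \subseteq)$ has no ascending chain and no antichain.
   Context: $A^* = \bigcup_{n \in \mathbb{N}_0} A^n$ is the set of finite words over $A$. The embedding order $\le_e$ on words over an alphabet is defined by recursion on the length of $x$: the empty word satisfies $\emptyset \le_e y$ for all $y$; if $x = au$ with $a$ a letter and $u$ a word, then $x \le_e y$ iff there are words $v,w$ with $y = vaw$ and $u \le_e w$ (i.e. $x$ is obtained from $y$ by deleting letters). Let $B := (A\times\{0\}) \cup (A \times \{1\})$ and define $\varphi: A^* \to B^*$ by $\varphi(a_1,\dots,a_n) := (b_1,\dots,b_n)$ where $b_i := (a_i,0)$ if $a_i \notin \{a_1,\dots,a_{i-1}\}$ and $b_i := (a_i,1)$ otherwise. For $u = (a_1,\dots,a_n)$ let $S(u) := \{a_1,\dots,a_n\}$. For $u,v \in A^*$, $u \le_E v$ iff $\varphi(u) \le_e \varphi(v)$ and $S(u) = S(v)$. For a partially ordered set $(P,\le)$: a sequence $(a_i)_{i\in\mathbb{N}_0}$ is a descending chain if $a_i > a_{i+1}$ for all $i$, an ascending chain if $a_i < a_{i+1}$ for all $i$, and an antichain if $a_i \le a_j$ implies $i=j$. A subset $U \subseteq P$ is upward closed if $u\in U$, $u \le a$ imply $a \in U$; $U(P,\le)$ denotes the set of upward closed subsets of $P$, ordered by inclusion. *)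

theory Defs
  imports Main
begin

fun emb :: "'b list \<Rightarrow> 'b list \<Rightarrow> bool" where
  "emb [] y = True"
| "emb (a # u) y = (\<exists>v w. y = v @ a # w \<and> emb u w)"

definition phi :: "'a list \<Rightarrow> ('a \<times> nat) list" where
  "phi xs = map (\<lambda>i. (xs ! i, if xs ! i \<in> set (take i xs) then 1 else 0)) [0..<length xs]"

definition S :: "'a list \<Rightarrow> 'a set" where
  "S u = set u"

definition leE :: "'a list \<Rightarrow> 'a list \<Rightarrow> bool" where
  "leE u v \<longleftrightarrow> emb (phi u) (phi v) \<and> S u = S v"

definition words :: "'a set \<Rightarrow> 'a list set" where
  "words A = {xs. set xs \<subseteq> A}"

definition descending_chain :: "'p set \<Rightarrow> ('p \<Rightarrow> 'p \<Rightarrow> bool) \<Rightarrow> (nat \<Rightarrow> 'p) \<Rightarrow> bool" where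
  "descending_chain P le f \<longleftrightarrow>
     (\<forall>i. f i \<in> P) \<and> (\<forall>i. le (f (Suc i)) (f i) \<and> f (Suc i) \<noteq> f i)"

definition ascending_chain :: "'p set \<Rightarrow> ('p \<Rightarrow> 'p \<Rightarrow> bool) \<Rightarrow> (nat \<Rightarrow> 'p) \<Rightarrow> bool" where
  "ascending_chain P le f \<longleftrightarrow>
     (\<forall>i. f i \<in> P) \<and> (\<forall>i. le (f i) (f (Suc i)) \<and> f i \<noteq> f (Suc i))"

definition antichain :: "'p set \<Rightarrow> ('p \<Rightarrow> 'p \<Rightarrow> bool) \<Rightarrow> (nat \<Rightarrow> 'p) \<Rightarrow> bool" where
  "antichain P le f \<longleftrightarrow> (\<forall>i. f i \<in> P) \<and> (\<forall>i j. le (f i) (f j) \<longrightarrow> i = j)"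

definition upward_closed :: "'p set \<Rightarrow> ('p \<Rightarrow> 'p \<Rightarrow> bool) \<Rightarrow> 'p set \<Rightarrow> bool" where
  "upward_closed P le U \<longleftrightarrow> U \<subseteq> P \<and> (\<forall>u a. u \<in> U \<and> a \<in> P \<and> le u a \<longrightarrow> a \<in> U)"

definition upsets :: "'p set \<Rightarrow> ('p \<Rightarrow> 'p \<Rightarrow> bool) \<Rightarrow> 'p set set" where
  "upsets P le = {U. upward_closed P le U}"

end

theory Submission
  imports Defs "HOL-Library.Sublist" "HOL-Library.Infinite_Set"
begin

text \<open>The word \<open>code u\<close>, the letter \<open>S(u)\<close> followed by \<open>\<phi>(u)\<close>, lies over the finite
  alphabet \<open>A \<times> {0, 1} + Pow A\<close>, and \<open>u \<le>\<^sub>E v\<close> holds iff \<open>code u\<close> is a subword of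
  \<open>code v\<close>. By Higman's lemma the subword order over a finite alphabet is almost full,
  hence so is \<open>\<le>\<^sub>E\<close>: this excludes antichains and, since \<open>\<le>\<^sub>E\<close> is a partial order,
  descending chains. The complements of an ascending chain of upward closed sets would be a
  strictly decreasing chain of downward closed sets, and picking \<open>x\<^sub>i \<in> D\<^sub>i - D\<^sub>i\<^sub>+\<^sub>1\<close>
  would give a bad sequence.

  Antichains of upward closed sets are excluded by passing to complements: the downward closed
  sets of the subword order over a finite alphabet \<open>B\<close> are almost full under inclusion. Each
  of them is a finite union of products of atoms \<open>a + \<epsilon>\<close> and \<open>C\<^sup>*\<close> (\<open>a \<in> B\<close>, \<open>C \<subseteq> B\<close>): if
  \<open>D \<subseteq> L(P)\<close> misses a word \<open>w \<in> L(P)\<close>, then \<open>L(P)\<close> minus the words above \<open>w\<close> is a finite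
  union of strictly smaller products, and strict inclusion of downward closed sets is
  well-founded. Products are compared by embedding their atom lists, and Higman's lemma applied
  twice shows that finite lists of products are almost full.\<close>

section \<open>Almost-full relations\<close>

definition good :: "('b \<Rightarrow> 'b \<Rightarrow> bool) \<Rightarrow> (nat \<Rightarrow> 'b) \<Rightarrow> bool" where
  "good P f \<longleftrightarrow> (\<exists>i j. i < j \<and> P (f i) (f j))"

definition almost_full_on :: "('b \<Rightarrow> 'b \<Rightarrow> bool) \<Rightarrow> 'b set \<Rightarrow> bool" where
  "almost_full_on P A \<longleftrightarrow> (\<forall>f. (\<forall>i. f i \<in> A) \<longrightarrow> good P f)"

lemma almost_full_onD:
  fixes f :: "nat \<Rightarrow> 'b"
  assumes "almost_full_on P A" "\<And>i. f i \<in> A"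
  obtains i j where "i < j" "P (f i) (f j)"
proof -
  have "good P f" using assms unfolding almost_full_on_def by blast
  then show ?thesis using that unfolding good_def by blast
qed

lemma almost_full_onI:
  "(\<And>f. \<forall>i. f i \<in> A \<Longrightarrow> good P f) \<Longrightarrow> almost_full_on P A"
  unfolding almost_full_on_def by blast

lemma almost_full_on_finite:
  assumes "finite A" "\<And>x. x \<in> A \<Longrightarrow> P x x"
  shows "almost_full_on P A"
proof (rule almost_full_onI)
  fix f :: "nat \<Rightarrow> _" assume "\<forall>i. f i \<in> A"
  then have "range f \<subseteq> A" by blast
  then have "finite (range f)" using assms(1) by (rule finite_subset)
  then have "\<not> inj f" using finite_imageD by blast
  then obtain i j where "i \<noteq> j" "f i = f j" unfolding inj_def by blast
  with \<open>\<forall>i. f i \<in> A\<close> show "good P f"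
    unfolding good_def by (metis assms(2) linorder_neq_iff)
qed

lemma almost_full_on_map:
  assumes "almost_full_on Q B" "\<And>x. x \<in> A \<Longrightarrow> h x \<in> B"
    and "\<And>x y. x \<in> A \<Longrightarrow> y \<in> A \<Longrightarrow> Q (h x) (h y) \<Longrightarrow> P x y"
  shows "almost_full_on P A"
proof (rule almost_full_onI)
  fix f :: "nat \<Rightarrow> _" assume f: "\<forall>i. f i \<in> A"
  then obtain i j where "i < j" "Q (h (f i)) (h (f j))"
    using almost_full_onD[OF assms(1), of "h \<circ> f"] assms(2) by auto
  then show "good P f" unfolding good_def using f assms(3) by blast
qed

lemma almost_full_on_hom:
  assumes "almost_full_on Q B" "A \<subseteq> h ` B"
    and "\<And>x y. x \<in> B \<Longrightarrow> y \<in> B \<Longrightarrow> Q x y \<Longrightarrow> P (h x) (h y)"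
  shows "almost_full_on P A"
proof (rule almost_full_onI)
  fix f :: "nat \<Rightarrow> _" assume "\<forall>i. f i \<in> A"
  then have "\<forall>i. \<exists>x\<in>B. f i = h x" using assms(2) by blast
  then obtain g where g: "\<And>i. g i \<in> B" "\<And>i. f i = h (g i)" by metis
  then obtain i j where "i < j" "Q (g i) (g j)" using almost_full_onD[OF assms(1)] by metis
  then show "good P f" unfolding good_def using g assms(3) by metis
qed

lemma transp_chain_less:
  assumes "transp P" "\<And>n. P (f n) (f (Suc n))" "m < n"
  shows "P (f m) (f n)"
  using assms(3)
proof (induction n)
  case (Suc n)
  then show ?case using assms(1,2) less_Suc_eq transpD by metis
qed simp

lemma almost_full_on_imp_no_antichain:
  "almost_full_on P A \<Longrightarrow> \<not> antichain A P f"
  unfolding antichain_def by (metis almost_full_onD less_irrefl)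

lemma almost_full_on_imp_no_descending_chain:
  assumes "almost_full_on P A" "transp P" "antisymp P"
  shows "\<not> descending_chain A P f"
proof
  assume chain: "descending_chain A P f"
  then obtain i j where "i < j" "P (f i) (f j)"
    using almost_full_onD[OF assms(1)] unfolding descending_chain_def by metis
  moreover have "j = Suc i \<or> P (f j) (f (Suc i))"
    using transp_chain_less[of "P\<inverse>\<inverse>" "f" "Suc i" j] assms(2) chain \<open>i < j\<close>
    unfolding descending_chain_def by fastforce
  ultimately have "P (f i) (f (Suc i))" using assms(2) transpD by metis
  then show False using chain assms(3) unfolding descending_chain_def antisymp_def by metis
qed

definition downward_closed :: "'p set \<Rightarrow> ('p \<Rightarrow> 'p \<Rightarrow> bool) \<Rightarrow> 'p set \<Rightarrow> bool" where
  "downward_closed P le D \<longleftrightarrow> D \<subseteq> P \<and> (\<forall>d a. d \<in> D \<and> a \<in> P \<and> le a d \<longrightarrow> a \<in> D)"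

definition downsets :: "'p set \<Rightarrow> ('p \<Rightarrow> 'p \<Rightarrow> bool) \<Rightarrow> 'p set set" where
  "downsets P le = {D. downward_closed P le D}"

lemma Diff_in_downsets: "U \<in> upsets P le \<Longrightarrow> P - U \<in> downsets P le"
  unfolding upsets_def downsets_def upward_closed_def downward_closed_def by blast

lemma almost_full_on_imp_no_decreasing_downsets:
  assumes "almost_full_on le P" "\<And>i. D i \<in> downsets P le"
  shows "\<not> (\<forall>i. D (Suc i) \<subset> D i)"
proof
  assume D: "\<forall>i. D (Suc i) \<subset> D i"
  then have "\<forall>i. \<exists>y. y \<in> D i - D (Suc i)" by blast
  then obtain x where x: "\<And>i. x i \<in> D i - D (Suc i)" by metis
  then have "x i \<in> P" for i using assms(2) unfolding downsets_def downward_closed_def by blast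
  then obtain i j where "i < j" "le (x i) (x j)" by (rule almost_full_onD[OF assms(1)])
  moreover have "D j \<subseteq> D (Suc i)"
    using lift_Suc_antimono_le[of D "Suc i" j] D \<open>i < j\<close> by (simp add: psubset_imp_subset)
  ultimately have "x i \<in> D (Suc i)"
    using x assms(2) \<open>x i \<in> P\<close> unfolding downsets_def downward_closed_def by blast
  then show False using x by blast
qed

lemma wf_psubset_downsets:
  assumes "almost_full_on le P"
  shows "wf {(X, Y). X \<subset> Y \<and> X \<in> downsets P le \<and> Y \<in> downsets P le}"
  unfolding wf_iff_no_infinite_down_chain
proof
  assume "\<exists>D. \<forall>i.
    (D (Suc i), D i) \<in> {(X, Y). X \<subset> Y \<and> X \<in> downsets P le \<and> Y \<in> downsets P le}"
  then obtain D
    where "\<forall>i. (D (Suc i), D i) \<in> {(X, Y). X \<subset> Y \<and> X \<in> downsets P le \<and> Y \<in> downsets P le}"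
    by (elim exE)
  then have "\<And>i. D i \<in> downsets P le" "\<forall>i. D (Suc i) \<subset> D i" by auto
  then show False using almost_full_on_imp_no_decreasing_downsets[OF assms] by blast
qed

lemma almost_full_on_imp_no_ascending_chain_upsets:
  assumes "almost_full_on le P"
  shows "\<not> ascending_chain (upsets P le) (\<subseteq>) F"
proof
  assume "ascending_chain (upsets P le) (\<subseteq>) F"
  then have up: "F i \<in> upsets P le" "F i \<subset> F (Suc i)" for i
    unfolding ascending_chain_def by auto
  then have "F i \<subseteq> P" for i unfolding upsets_def upward_closed_def by blast
  with up have "\<forall>i. P - F (Suc i) \<subset> P - F i" by blast
  with up(1) show False
    using almost_full_on_imp_no_decreasing_downsets[OF assms, of "\<lambda>i. P - F i"] Diff_in_downsets
    by blast
qed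

lemma almost_full_on_downsets_imp_no_antichain_upsets:
  assumes "almost_full_on (\<subseteq>) (downsets P le)"
  shows "\<not> antichain (upsets P le) (\<subseteq>) F"
proof
  assume F: "antichain (upsets P le) (\<subseteq>) F"
  then have "\<And>i. P - F i \<in> downsets P le" unfolding antichain_def by (blast intro: Diff_in_downsets)
  then obtain i j where "i < j" "P - F i \<subseteq> P - F j" by (rule almost_full_onD[OF assms])
  moreover have "F i \<subseteq> P" "F j \<subseteq> P"
    using F unfolding antichain_def upsets_def upward_closed_def by blast+
  ultimately have "F j \<subseteq> F i" by blast
  then show False using F \<open>i < j\<close> unfolding antichain_def by blast
qed

lemma almost_full_on_downsets_reflect:
  assumes "almost_full_on (\<subseteq>) (downsets Q le')" "reflp le'" "transp le'"
    and "\<And>x. x \<in> P \<Longrightarrow> h x \<in> Q" "\<And>x y. x \<in> P \<Longrightarrow> y \<in> P \<Longrightarrow> le' (h x) (h y) \<Longrightarrow> le x y"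
  shows "almost_full_on (\<subseteq>) (downsets P le)"
proof (rule almost_full_on_map[OF assms(1)])
  define cl where "cl D = {y \<in> Q. \<exists>x\<in>D. le' y (h x)}" for D
  show "cl D \<in> downsets Q le'" for D
    unfolding cl_def downsets_def downward_closed_def using assms(3) transpD by fast
  show "D1 \<subseteq> D2" if D1: "D1 \<in> downsets P le" and D2: "D2 \<in> downsets P le"
    and cl: "cl D1 \<subseteq> cl D2" for D1 D2
  proof
    fix x assume "x \<in> D1"
    with D1 have "x \<in> P" unfolding downsets_def downward_closed_def by blast
    then have "h x \<in> cl D1" unfolding cl_def using \<open>x \<in> D1\<close> assms(4) reflpD[OF assms(2)] by blast
    then obtain y where "y \<in> D2" "le' (h x) (h y)" using cl unfolding cl_def by blast
    then show "x \<in> D2" using D2 \<open>x \<in> P\<close> assms(5) unfolding downsets_def downward_closed_def by blast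
  qed
qed

section \<open>Higman's lemma\<close>

lemma almost_full_on_imp_homogeneous_subseq:
  fixes f :: "nat \<Rightarrow> 'b"
  assumes "almost_full_on P A" "transp P" "\<And>i. f i \<in> A"
  obtains \<phi> :: "nat \<Rightarrow> nat" where "strict_mono \<phi>" "\<And>i j. i < j \<Longrightarrow> P (f (\<phi> i)) (f (\<phi> j))"
proof -
  define T where "T = {i. \<forall>j>i. \<not> P (f i) (f j)}"
  have "finite T"
  proof (rule ccontr)
    assume "infinite T"
    then obtain i j where "i < j" "P (f (enumerate T i)) (f (enumerate T j))"
      using almost_full_onD[OF assms(1), of "f \<circ> enumerate T"] assms(3) by auto
    moreover have "enumerate T i \<in> T" "enumerate T i < enumerate T j"
      using \<open>infinite T\<close> \<open>i < j\<close> by (simp_all add: enumerate_in_set enumerate_mono)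
    ultimately show False unfolding T_def by blast
  qed
  then obtain N where "\<forall>i\<in>T. i < N" using finite_nat_set_iff_bounded by blast
  then have step: "\<exists>j>i. P (f i) (f j)" if "N \<le> i" for i
    using that unfolding T_def by fastforce
  have "\<exists>\<phi>. \<forall>n. N \<le> \<phi> n \<and> \<phi> n < \<phi> (Suc n) \<and> P (f (\<phi> n)) (f (\<phi> (Suc n)))"
  proof (rule dependent_nat_choice)
    show "\<exists>y. N \<le> y \<and> x < y \<and> P (f x) (f y)" if "N \<le> x" for x :: nat and n :: nat
      using step[OF that] that by (meson less_imp_le order.trans)
  qed blast
  then obtain \<phi> where \<phi>: "\<And>n. N \<le> \<phi> n \<and> \<phi> n < \<phi> (Suc n) \<and> P (f (\<phi> n)) (f (\<phi> (Suc n)))"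
    by blast
  have "strict_mono \<phi>" using \<phi> by (simp add: strict_mono_Suc_iff)
  moreover have "P (f (\<phi> i)) (f (\<phi> j))" if "i < j" for i j
    using transp_chain_less[of P "f \<circ> \<phi>"] assms(2) \<phi> that by simp
  ultimately show thesis by (rule that)
qed

text \<open>Nash-Williams' minimal bad sequence: position by position, choose a bad sequence that
  agrees with the previous choice so far and has a shortest entry at the current position.\<close>

lemma minimal_bad_seq:
  fixes f :: "nat \<Rightarrow> 'b" and size :: "'b \<Rightarrow> nat"
  assumes "\<And>i. f i \<in> A" "\<not> good P f"
  obtains m where "\<And>i. m i \<in> A" "\<not> good P m"
    "\<And>g n. \<forall>i. g i \<in> A \<Longrightarrow> \<not> good P g \<Longrightarrow> \<forall>k<n. g k = m k \<Longrightarrow> size (m n) \<le> size (g n)"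
proof -
  define BAD where "BAD = {g. (\<forall>i. g i \<in> A) \<and> \<not> good P g}"
  define min_at where
    "min_at n g \<longleftrightarrow> g \<in> BAD \<and> (\<forall>h\<in>BAD. (\<forall>k<n. h k = g k) \<longrightarrow> size (g n) \<le> size (h n))" for n g
  have extend: "\<exists>g'. min_at n g' \<and> (\<forall>k<n. g' k = g k)" if "g \<in> BAD" for g n
    using ex_has_least_nat[of "\<lambda>h. h \<in> BAD \<and> (\<forall>k<n. h k = g k)" g "\<lambda>h. size (h n)"] that
    unfolding min_at_def by auto
  obtain G where G: "\<And>n. (\<forall>k\<le>n. min_at k (G n)) \<and> (\<forall>k\<le>n. G (Suc n) k = G n k)"
  proof (atomize_elim, rule dependent_nat_choice)
    show "\<exists>g. \<forall>k\<le>0. min_at k g"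
      using extend[of f 0] assms unfolding BAD_def by auto
    show "\<exists>g'. (\<forall>k\<le>Suc n. min_at k g') \<and> (\<forall>k\<le>n. g' k = g k)" if "\<forall>k\<le>n. min_at k g" for g n
    proof -
      have "g \<in> BAD" using that unfolding min_at_def by blast
      then obtain g' where g': "min_at (Suc n) g'" "\<forall>k<Suc n. g' k = g k"
        using extend by blast
      have "min_at k g'" if "k \<le> n" for k
        using \<open>\<forall>k\<le>n. min_at k g\<close> g' that unfolding min_at_def by auto
      with g' show ?thesis by (intro exI[of _ g']) (auto simp: le_Suc_eq)
    qed
  qed
  define m where "m k = G k k" for k
  have G_m: "G n k = m k" if "k \<le> n" for n k
    using that
  proof (induction n)
    case (Suc n)
    then show ?case using G unfolding m_def by (metis le_Suc_eq)
  qed (simp add: m_def)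
  have G_BAD: "G n \<in> BAD" for n
    using G[of n] unfolding min_at_def by blast
  show thesis
  proof (rule that)
    show "m i \<in> A" for i using G_BAD[of i] unfolding m_def BAD_def by blast
    show "\<not> good P m"
    proof
      assume "good P m"
      then obtain i j where "i < j" "P (m i) (m j)" unfolding good_def by blast
      then have "P (G j i) (G j j)" using G_m by simp
      with \<open>i < j\<close> G_BAD[of j] show False unfolding BAD_def good_def by blast
    qed
    show "size (m n) \<le> size (g n)" if "\<forall>i. g i \<in> A" "\<not> good P g" "\<forall>k<n. g k = m k" for g n
    proof -
      have "g \<in> BAD" "\<forall>k<n. g k = G n k" using that G_m unfolding BAD_def by auto
      moreover have "min_at n (G n)" using G by blast
      ultimately show ?thesis unfolding min_at_def m_def by blast
    qed
  qed
qed

lemma good_list_emb_tails: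
  assumes m: "\<And>i. m i = a i # t i"
    and \<phi>: "strict_mono \<phi>" "\<And>i j. i < j \<Longrightarrow> P (a (\<phi> i)) (a (\<phi> j))"
    and good: "good (list_emb P) (\<lambda>k. if k < \<phi> 0 then m k else t (\<phi> (k - \<phi> 0)))"
  shows "good (list_emb P) m"
proof -
  obtain i j where ij: "i < j" and emb: "list_emb P
      (if i < \<phi> 0 then m i else t (\<phi> (i - \<phi> 0))) (if j < \<phi> 0 then m j else t (\<phi> (j - \<phi> 0)))"
    using good unfolding good_def by blast
  consider "j < \<phi> 0" | "i < \<phi> 0" "\<not> j < \<phi> 0" | "\<not> i < \<phi> 0" using ij by linarith
  then show ?thesis
  proof cases
    case 1
    then show ?thesis using ij emb unfolding good_def by auto
  next
    case 2
    then have "i < \<phi> (j - \<phi> 0)" using strict_mono_less_eq[OF \<phi>(1), of 0 "j - \<phi> 0"] by simp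
    moreover have "list_emb P (m i) (m (\<phi> (j - \<phi> 0)))"
      using emb 2 m by (simp add: list_emb_Cons)
    ultimately show ?thesis unfolding good_def by blast
  next
    case 3
    then have "\<phi> (i - \<phi> 0) < \<phi> (j - \<phi> 0)" "P (a (\<phi> (i - \<phi> 0))) (a (\<phi> (j - \<phi> 0)))"
      using ij strict_mono_less[OF \<phi>(1)] \<phi>(2) by auto
    moreover have "list_emb P (t (\<phi> (i - \<phi> 0))) (t (\<phi> (j - \<phi> 0)))"
      using emb 3 ij by simp
    ultimately show ?thesis using m unfolding good_def by (metis list_emb_Cons2)
  qed
qed

theorem almost_full_on_lists:
  assumes "almost_full_on P A" "transp P"
  shows "almost_full_on (list_emb P) (lists A)"
proof (rule almost_full_onI, rule ccontr)
  fix f assume f: "\<forall>i. f i \<in> lists A" "\<not> good (list_emb P) f"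
  obtain m where m: "\<And>i. m i \<in> lists A" "\<not> good (list_emb P) m"
    and m_min: "\<And>g n. \<forall>i. g i \<in> lists A \<Longrightarrow> \<not> good (list_emb P) g \<Longrightarrow> \<forall>k<n. g k = m k
      \<Longrightarrow> length (m n) \<le> length (g n)"
    by (rule minimal_bad_seq[where size = length, OF f(1)[THEN spec] f(2)]) blast+
  define a where "a i = hd (m i)" for i
  define t where "t i = tl (m i)" for i
  have "m i \<noteq> []" for i using m(2) unfolding good_def by (metis lessI list_emb_Nil)
  then have m_split: "m i = a i # t i" for i unfolding a_def t_def by simp
  then have "a i \<in> A" "t i \<in> lists A" for i using m(1)[of i] by auto
  then obtain \<phi> :: "nat \<Rightarrow> nat"
    where \<phi>: "strict_mono \<phi>" "\<And>i j. i < j \<Longrightarrow> P (a (\<phi> i)) (a (\<phi> j))"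
    using almost_full_on_imp_homogeneous_subseq[OF assms] by metis
  \<comment> \<open>shorter than \<open>m\<close> at position \<open>\<phi> 0\<close>, hence good by minimality\<close>
  define g where "g k = (if k < \<phi> 0 then m k else t (\<phi> (k - \<phi> 0)))" for k
  have "\<forall>i. g i \<in> lists A" unfolding g_def using m(1) \<open>\<And>i. t i \<in> lists A\<close> by simp
  moreover have "\<forall>k<\<phi> 0. g k = m k" unfolding g_def by simp
  moreover have "length (g (\<phi> 0)) < length (m (\<phi> 0))" unfolding g_def using m_split by simp
  ultimately have "good (list_emb P) g" using m_min[of g "\<phi> 0"] by (meson not_le)
  then have "good (list_emb P) m"
    using good_list_emb_tails[of m a t \<phi> P] m_split \<phi> unfolding g_def by blast
  with m(2) show False by contradiction
qed

lemma transp_list_emb: "transp P \<Longrightarrow> transp (list_emb P)"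
  by (rule transpI) (rule list_emb_trans, auto dest: transpD)

corollary almost_full_on_subseq: "finite A \<Longrightarrow> almost_full_on subseq (lists A)"
  using almost_full_on_lists[of "(=)" A] almost_full_on_finite[of A "(=)"] by (simp add: transp_def)

lemma subseq_in_lists: "subseq y x \<Longrightarrow> x \<in> lists B \<Longrightarrow> y \<in> lists B"
  by (induction rule: list_emb.induct) auto

lemma subseq_Cons_append_skip:
  "a \<notin> set u \<Longrightarrow> subseq (a # w) (u @ v) \<Longrightarrow> subseq (a # w) v"
  by (induction u) (auto split: if_splits)

section \<open>Downward closed sets of words\<close>

text \<open>Products of atoms \<open>a + \<epsilon>\<close> and \<open>C\<^sup>*\<close> are the ideals of the subword order.\<close>

datatype 'b atom = Opt 'b | Star "'b set"

fun lang_atom :: "'b atom \<Rightarrow> 'b list set" where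
  "lang_atom (Opt a) = {[], [a]}"
| "lang_atom (Star C) = lists C"

definition conc_atom :: "'b atom \<Rightarrow> 'b list set \<Rightarrow> 'b list set" where
  "conc_atom X L = {u @ v | u v. u \<in> lang_atom X \<and> v \<in> L}"

fun lang :: "'b atom list \<Rightarrow> 'b list set" where
  "lang [] = {[]}"
| "lang (X # P) = conc_atom X (lang P)"

definition atoms :: "'b set \<Rightarrow> 'b atom set" where
  "atoms B = Opt ` B \<union> Star ` Pow B"

fun le_atom :: "'b atom \<Rightarrow> 'b atom \<Rightarrow> bool" where
  "le_atom (Opt a) (Opt b) \<longleftrightarrow> a = b"
| "le_atom (Opt a) (Star C) \<longleftrightarrow> a \<in> C"
| "le_atom (Star C) (Star D) \<longleftrightarrow> C \<subseteq> D"
| "le_atom (Star C) (Opt b) \<longleftrightarrow> False"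

lemma finite_atoms: "finite B \<Longrightarrow> finite (atoms B)"
  unfolding atoms_def by simp

lemma le_atom_refl: "le_atom X X"
  by (cases X) auto

lemma transp_le_atom: "transp le_atom"
proof (rule transpI)
  show "le_atom X Z" if "le_atom X Y" "le_atom Y Z" for X Y Z
    using that by (cases X; cases Y; cases Z) auto
qed

lemma Nil_in_lang: "[] \<in> lang P"
proof (induction P)
  case (Cons X P)
  then have "[] @ [] \<in> conc_atom X (lang P)"
    unfolding conc_atom_def by (cases X) auto
  then show ?case by simp
qed simp

lemma lang_mono: "list_emb le_atom P Q \<Longrightarrow> lang P \<subseteq> lang Q"
proof (induction rule: list_emb.induct)
  case (list_emb_Nil Q)
  then show ?case using Nil_in_lang by simp
next
  case (list_emb_Cons P Q Y)
  have "v \<in> conc_atom Y (lang Q)" if "v \<in> lang Q" for v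
    using that unfolding conc_atom_def by (cases Y) force+
  then show ?case using list_emb_Cons.IH by auto
next
  case (list_emb_Cons2 X Y P Q)
  then have "lang_atom X \<subseteq> lang_atom Y" by (cases X; cases Y) auto
  then show ?case using list_emb_Cons2.IH unfolding lang.simps conc_atom_def by blast
qed

lemma lang_Star: "lang [Star B] = lists B"
  unfolding lang.simps conc_atom_def by auto

lemma lang_atom_subseq_closed:
  assumes "x \<in> lang_atom X" "subseq y x"
  shows "y \<in> lang_atom X"
proof (cases X)
  case (Opt a)
  then show ?thesis using assms by (cases y) (auto split: if_splits)
next
  case (Star C)
  then show ?thesis using assms subseq_in_lists by auto
qed

lemma lang_in_downsets:
  assumes "P \<in> lists (atoms B)"
  shows "lang P \<in> downsets (lists B) subseq"
  using assms
proof (induction P)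
  case Nil
  then show ?case unfolding downsets_def downward_closed_def by auto
next
  case (Cons X P)
  then have IH: "lang P \<subseteq> lists B" "\<And>x y. x \<in> lang P \<Longrightarrow> subseq y x \<Longrightarrow> y \<in> lang P"
    unfolding downsets_def downward_closed_def by (auto, meson subseq_in_lists subsetD)
  have "X \<in> atoms B" using Cons by simp
  then have X: "lang_atom X \<subseteq> lists B" "\<And>x y. x \<in> lang_atom X \<Longrightarrow> subseq y x \<Longrightarrow> y \<in> lang_atom X"
    using lang_atom_subseq_closed unfolding atoms_def by auto blast
  show ?case unfolding downsets_def downward_closed_def
  proof (intro CollectI conjI allI impI)
    show "lang (X # P) \<subseteq> lists B" using IH(1) X(1) unfolding lang.simps conc_atom_def by fastforce
    show "y \<in> lang (X # P)" if xy: "x \<in> lang (X # P) \<and> y \<in> lists B \<and> subseq y x" for x y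
    proof -
      obtain u v where "x = u @ v" "u \<in> lang_atom X" "v \<in> lang P"
        using xy unfolding lang.simps conc_atom_def by blast
      moreover obtain u' v' where "y = u' @ v'" "subseq u' u" "subseq v' v"
        using xy \<open>x = u @ v\<close> subseq_appendE by blast
      ultimately show ?thesis using IH(2) X(2) unfolding lang.simps conc_atom_def by blast
    qed
  qed
qed

lemma conc_atom_Opt: "conc_atom (Opt a) L = L \<union> (#) a ` L"
proof -
  have "conc_atom (Opt a) L = {[] @ v | v. v \<in> L} \<union> {[a] @ v | v. v \<in> L}"
    unfolding conc_atom_def by (auto, metis append_Cons append_Nil)
  then show ?thesis by auto
qed

lemma conc_atom_UN: "conc_atom X (\<Union>i\<in>I. L i) = (\<Union>i\<in>I. conc_atom X (L i))"
  unfolding conc_atom_def by blast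

lemma conc_Opt_Diff_upset_neq:
  "b \<noteq> a \<Longrightarrow>
    conc_atom (Opt b) L - {x. subseq (a # w) x} = conc_atom (Opt b) (L - {x. subseq (a # w) x})"
  unfolding conc_atom_Opt by auto

lemma conc_Opt_Diff_upset_eq:
  "conc_atom (Opt a) L - {x. subseq (a # w) x}
     = (L - {x. subseq (a # w) x}) \<union> conc_atom (Opt a) (L - {x. subseq w x})"
  unfolding conc_atom_Opt by (auto dest: subseq_Cons')

text \<open>A word of \<open>C\<^sup>*\<close> either avoids \<open>a\<close> or splits at its first \<open>a\<close>.\<close>

lemma conc_Star_Diff_upset_subset:
  assumes "x \<in> conc_atom (Star C) L - {x. subseq (a # w) x}"
  shows "x \<in> conc_atom (Star (C - {a})) ((L - {x. subseq (a # w) x}) \<union>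
           (if a \<in> C then conc_atom (Opt a) (conc_atom (Star C) L - {x. subseq w x}) else {}))"
proof -
  obtain u v where x: "x = u @ v" "u \<in> lists C" "v \<in> L" "\<not> subseq (a # w) (u @ v)"
    using assms unfolding conc_atom_def by auto
  show ?thesis
  proof (cases "a \<in> set u")
    case False
    then have "\<not> subseq (a # w) v" using x(4) by (auto dest: subseq_drop_many)
    with False x show ?thesis unfolding conc_atom_def by auto
  next
    case True
    then obtain u1 u2 where u: "u = u1 @ a # u2" "a \<notin> set u1" by (metis split_list_first)
    have "\<not> subseq w (u2 @ v)"
      using x(4) u(1) subseq_drop_many[of "a # w" "a # u2 @ v" u1] by auto
    moreover have "u2 @ v \<in> conc_atom (Star C) L" using x u unfolding conc_atom_def by auto
    moreover have "a \<in> C" using True x(2) by auto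
    ultimately have "[a] @ (u2 @ v) \<in> (if a \<in> C then conc_atom (Opt a)
        (conc_atom (Star C) L - {x. subseq w x}) else {})"
      by (simp add: conc_atom_Opt)
    moreover have "u1 \<in> lists (C - {a})" using x(2) u by auto
    moreover have "x = u1 @ [a] @ (u2 @ v)" using x(1) u(1) by simp
    ultimately show ?thesis unfolding conc_atom_def lang_atom.simps by blast
  qed
qed

lemma conc_Star_Diff_upset_supset:
  assumes "x \<in> conc_atom (Star (C - {a})) ((L - {x. subseq (a # w) x}) \<union>
             (if a \<in> C then conc_atom (Opt a) (conc_atom (Star C) L - {x. subseq w x}) else {}))"
  shows "x \<in> conc_atom (Star C) L - {x. subseq (a # w) x}"
proof -
  obtain u r where x: "x = u @ r" "u \<in> lists (C - {a})" "r \<in> (L - {x. subseq (a # w) x}) \<union>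
      (if a \<in> C then conc_atom (Opt a) (conc_atom (Star C) L - {x. subseq w x}) else {})"
    using assms unfolding conc_atom_def by auto
  then have "a \<notin> set u" by auto
  show ?thesis
  proof (cases "r \<in> L - {x. subseq (a # w) x}")
    case True
    then show ?thesis
      using x \<open>a \<notin> set u\<close> subseq_Cons_append_skip[of a u w r] unfolding conc_atom_def by auto
  next
    case False
    then obtain y z where r: "r = y @ z" "y \<in> {[], [a]}" "z \<in> conc_atom (Star C) L" "\<not> subseq w z"
        and "a \<in> C"
      using x(3) unfolding conc_atom_def by (auto split: if_splits)
    then obtain u2 v where z: "z = u2 @ v" "u2 \<in> lists C" "v \<in> L" unfolding conc_atom_def by auto
    have "x = (u @ y @ u2) @ v" "u @ y @ u2 \<in> lists C" using x r z \<open>a \<in> C\<close> by auto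
    moreover have "\<not> subseq (a # w) x"
    proof
      assume "subseq (a # w) x"
      then have "subseq (a # w) (y @ z)"
        using x(1) r(1) \<open>a \<notin> set u\<close> subseq_Cons_append_skip by simp
      then have "subseq w z" using r(2) by (auto dest: subseq_Cons')
      then show False using r(4) by contradiction
    qed
    ultimately show ?thesis using z(3) unfolding conc_atom_def lang_atom.simps by blast
  qed
qed

lemma conc_Star_Diff_upset:
  "conc_atom (Star C) L - {x. subseq (a # w) x}
     = conc_atom (Star (C - {a})) ((L - {x. subseq (a # w) x}) \<union>
         (if a \<in> C then conc_atom (Opt a) (conc_atom (Star C) L - {x. subseq w x}) else {}))"
  by (rule equalityI; rule subsetI)
    (erule conc_Star_Diff_upset_subset, erule conc_Star_Diff_upset_supset)

definition finite_product_union :: "'b set \<Rightarrow> 'b list set \<Rightarrow> bool" where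
  "finite_product_union B L \<longleftrightarrow> (\<exists>Ps. set Ps \<subseteq> lists (atoms B) \<and> L = (\<Union>P\<in>set Ps. lang P))"

lemma finite_product_union_empty: "finite_product_union B {}"
  unfolding finite_product_union_def by (intro exI[of _ "[]"]) simp

lemma finite_product_union_lang: "P \<in> lists (atoms B) \<Longrightarrow> finite_product_union B (lang P)"
  unfolding finite_product_union_def by (intro exI[of _ "[P]"]) simp

lemma finite_product_union_Un:
  assumes "finite_product_union B L" "finite_product_union B M"
  shows "finite_product_union B (L \<union> M)"
proof -
  obtain Ps Qs where "set Ps \<subseteq> lists (atoms B)" "L = (\<Union>P\<in>set Ps. lang P)"
    "set Qs \<subseteq> lists (atoms B)" "M = (\<Union>P\<in>set Qs. lang P)"
    using assms unfolding finite_product_union_def by blast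
  then show ?thesis unfolding finite_product_union_def by (intro exI[of _ "Ps @ Qs"]) auto
qed

lemma finite_product_union_UN:
  "finite I \<Longrightarrow> (\<And>i. i \<in> I \<Longrightarrow> finite_product_union B (L i))
    \<Longrightarrow> finite_product_union B (\<Union>i\<in>I. L i)"
  by (induction rule: finite_induct)
    (simp_all add: finite_product_union_empty finite_product_union_Un)

lemma finite_product_union_conc_atom:
  assumes "X \<in> atoms B" "finite_product_union B L"
  shows "finite_product_union B (conc_atom X L)"
proof -
  obtain Ps where "set Ps \<subseteq> lists (atoms B)" "L = (\<Union>P\<in>set Ps. lang P)"
    using assms(2) unfolding finite_product_union_def by blast
  moreover have "conc_atom X (\<Union>P\<in>set Ps. lang P) = (\<Union>P\<in>set (map ((#) X) Ps). lang P)"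
    by (simp add: conc_atom_UN)
  moreover have "set (map ((#) X) Ps) \<subseteq> lists (atoms B)" using assms(1) calculation(1) by force
  ultimately show ?thesis unfolding finite_product_union_def by metis
qed

lemma finite_product_union_Cons_Diff_upset:
  assumes X: "X \<in> atoms B" and IH: "\<And>w. finite_product_union B (lang P - {x. subseq w x})"
  shows "finite_product_union B (lang (X # P) - {x. subseq w x})"
proof (induction w)
  case Nil
  then show ?case using finite_product_union_empty by simp
next
  case (Cons a w)
  show ?case
  proof (cases X)
    case (Opt b)
    show ?thesis
    proof (cases "b = a")
      case True
      have "lang (X # P) - {x. subseq (a # w) x}
          = (lang P - {x. subseq (a # w) x}) \<union> conc_atom (Opt a) (lang P - {x. subseq w x})"
        using Opt True conc_Opt_Diff_upset_eq by simp
      then show ?thesis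
        using X Opt True IH by (simp add: finite_product_union_Un finite_product_union_conc_atom)
    next
      case False
      have "lang (X # P) - {x. subseq (a # w) x}
          = conc_atom (Opt b) (lang P - {x. subseq (a # w) x})"
        using Opt False conc_Opt_Diff_upset_neq by simp
      then show ?thesis using X Opt IH by (simp add: finite_product_union_conc_atom)
    qed
  next
    case (Star C)
    have "lang (X # P) - {x. subseq (a # w) x}
        = conc_atom (Star (C - {a})) ((lang P - {x. subseq (a # w) x}) \<union>
           (if a \<in> C then conc_atom (Opt a) (lang (X # P) - {x. subseq w x}) else {}))"
      unfolding Star lang.simps by (rule conc_Star_Diff_upset)
    moreover have "Star (C - {a}) \<in> atoms B" "a \<in> C \<Longrightarrow> Opt a \<in> atoms B"
      using X Star unfolding atoms_def by auto
    ultimately show ?thesis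
      using IH Cons.IH by (simp add: finite_product_union_conc_atom finite_product_union_Un
        finite_product_union_empty)
  qed
qed

lemma finite_product_union_lang_Diff_upset:
  "P \<in> lists (atoms B) \<Longrightarrow> finite_product_union B (lang P - {x. subseq w x})"
proof (induction P arbitrary: w)
  case Nil
  show ?case
  proof (cases w)
    case Nil
    then show ?thesis using finite_product_union_empty by simp
  next
    case (Cons a w')
    then have "lang [] - {x. subseq w x} = lang []" by auto
    then show ?thesis using finite_product_union_lang[of "[]" B] by simp
  qed
next
  case (Cons X P)
  then show ?case using finite_product_union_Cons_Diff_upset[of X B P w] by simp
qed

lemma finite_product_union_downset_lang:
  assumes "finite B"
  shows "P \<in> lists (atoms B) \<Longrightarrow> D \<in> downsets (lists B) subseq \<Longrightarrow> D \<subseteq> lang P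
    \<Longrightarrow> finite_product_union B D"
proof (induction P arbitrary: D rule: wf_induct_rule[OF wf_inv_image[OF
      wf_psubset_downsets[OF almost_full_on_subseq[OF assms]], of lang]])
  case (1 P)
  show ?case
  proof (cases "D = lang P")
    case True
    then show ?thesis using "1.prems"(1) finite_product_union_lang by simp
  next
    case False
    then obtain w where w: "w \<in> lang P" "w \<notin> D" using "1.prems"(3) by blast
    have "finite_product_union B (lang P - {x. subseq w x})"
      using "1.prems"(1) by (rule finite_product_union_lang_Diff_upset)
    then obtain Ps where Ps: "set Ps \<subseteq> lists (atoms B)"
      "lang P - {x. subseq w x} = (\<Union>Q\<in>set Ps. lang Q)"
      unfolding finite_product_union_def by (elim exE conjE)
    have P_down: "lang P \<in> downsets (lists B) subseq" using "1.prems"(1) by (rule lang_in_downsets)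
    have "w \<in> lists B" using w(1) P_down unfolding downsets_def downward_closed_def by blast
    then have "\<not> subseq w x" if "x \<in> D" for x
      using that w(2) "1.prems"(2) unfolding downsets_def downward_closed_def by blast
    then have "D \<subseteq> lang P - {x. subseq w x}" using "1.prems"(3) by blast
    then have "D = (\<Union>Q\<in>set Ps. D \<inter> lang Q)" using Ps(2) by blast
    moreover have "finite_product_union B (D \<inter> lang Q)" if Q: "Q \<in> set Ps" for Q
    proof -
      have Q_lists: "Q \<in> lists (atoms B)" using Ps(1) Q by blast
      have "lang Q \<subset> lang P" using Ps(2) Q w(1) by blast
      moreover have "D \<inter> lang Q \<in> downsets (lists B) subseq"
        using "1.prems"(2) lang_in_downsets[OF Q_lists]
        unfolding downsets_def downward_closed_def by blast
      ultimately show ?thesis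
        using "1.IH"[of Q "D \<inter> lang Q"] Q_lists P_down lang_in_downsets[OF Q_lists] by simp
    qed
    ultimately show ?thesis by (metis finite_product_union_UN finite_set)
  qed
qed

lemma finite_product_union_downset:
  assumes "finite B" "D \<in> downsets (lists B) subseq"
  shows "finite_product_union B D"
proof (rule finite_product_union_downset_lang[OF assms(1) _ assms(2)])
  show "[Star B] \<in> lists (atoms B)" unfolding atoms_def by simp
  show "D \<subseteq> lang [Star B]"
    using assms(2) unfolding lang_Star downsets_def downward_closed_def by blast
qed

theorem almost_full_on_downsets_subseq:
  assumes "finite B"
  shows "almost_full_on (\<subseteq>) (downsets (lists B) subseq)"
proof (rule almost_full_on_hom)
  have "almost_full_on le_atom (atoms B)"
    using finite_atoms[OF assms] le_atom_refl by (rule almost_full_on_finite)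
  then show "almost_full_on (list_emb (list_emb le_atom)) (lists (lists (atoms B)))"
    using transp_le_atom transp_list_emb by (blast intro: almost_full_on_lists)
  show "downsets (lists B) subseq \<subseteq> (\<lambda>Ps. \<Union>Q\<in>set Ps. lang Q) ` lists (lists (atoms B))"
    using finite_product_union_downset[OF assms] unfolding finite_product_union_def by blast
  show "(\<Union>Q\<in>set Ps. lang Q) \<subseteq> (\<Union>Q\<in>set Ps'. lang Q)"
    if emb: "list_emb (list_emb le_atom) Ps Ps'" for Ps Ps'
  proof
    fix x assume "x \<in> (\<Union>Q\<in>set Ps. lang Q)"
    then obtain Q where Q: "Q \<in> set Ps" "x \<in> lang Q" by blast
    obtain Q' where "Q' \<in> set Ps'" "list_emb le_atom Q Q'" using list_emb_set[OF emb Q(1)] by blast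
    then show "x \<in> (\<Union>Q\<in>set Ps'. lang Q)" using lang_mono Q(2) by blast
  qed
qed

section \<open>The order \<open>\<le>\<^sub>E\<close>\<close>

lemma emb_iff_subseq: "emb x y \<longleftrightarrow> subseq x y"
proof (induction x arbitrary: y)
  case (Cons a u)
  have "subseq (a # u) y \<longleftrightarrow> (\<exists>v w. y = v @ a # w \<and> subseq u w)"
  proof
    assume "subseq (a # u) y"
    then show "\<exists>v w. y = v @ a # w \<and> subseq u w" using list_emb_ConsD[of "(=)" a u y] by blast
  qed (auto intro: subseq_drop_many)
  then show ?case using Cons.IH by simp
qed simp

definition code :: "'a list \<Rightarrow> ('a \<times> nat + 'a set) list" where
  "code u = Inr (set u) # map Inl (phi u)"

definition code_alphabet :: "'a set \<Rightarrow> ('a \<times> nat + 'a set) set" where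
  "code_alphabet A = Inl ` (A \<times> {0, 1}) \<union> Inr ` Pow A"

lemma map_fst_phi: "map fst (phi u) = u"
  unfolding phi_def by (simp add: comp_def map_nth)

lemma set_phi_subset: "set (phi u) \<subseteq> set u \<times> {0, 1}"
  unfolding phi_def by (auto split: if_splits)

lemma subseq_map_Inl_iff: "subseq (map Inl p) (map Inl q) \<longleftrightarrow> subseq p q"
proof
  assume "subseq (map Inl p) (map Inl q)"
  from subseq_map[OF this, of projl] show "subseq p q" by (simp add: comp_def)
qed (rule subseq_map)

lemma leE_iff_subseq_code: "leE u v \<longleftrightarrow> subseq (code u) (code v)"
proof (cases "set u = set v")
  case True
  then show ?thesis
    unfolding leE_def S_def code_def emb_iff_subseq by (simp add: subseq_map_Inl_iff)
next
  case False
  have "\<not> subseq (Inr (set u) # map Inl (phi u)) (map Inl (phi v))"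
    using list_emb_set[of "(=)" "Inr (set u) # map Inl (phi u)" "map Inl (phi v)"] by auto
  then show ?thesis using False unfolding leE_def S_def code_def by simp
qed

lemma code_inj: "code u = code v \<Longrightarrow> u = v"
proof -
  have "map (fst \<circ> projl) (tl (code w)) = w" for w :: "'a list"
    by (simp add: code_def comp_def map_fst_phi)
  then show "code u = code v \<Longrightarrow> u = v" by metis
qed

lemma code_in_lists:
  assumes "u \<in> words A"
  shows "code u \<in> lists (code_alphabet A)"
proof -
  have "set (phi u) \<subseteq> A \<times> {0, 1}" using assms set_phi_subset[of u] unfolding words_def by blast
  then have "Inl ` set (phi u) \<subseteq> code_alphabet A" unfolding code_alphabet_def by blast
  moreover have "Inr (set u) \<in> code_alphabet A"
    using assms unfolding words_def code_alphabet_def by blast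
  ultimately show ?thesis unfolding code_def by auto
qed

lemma finite_code_alphabet: "finite A \<Longrightarrow> finite (code_alphabet A)"
  unfolding code_alphabet_def by simp

lemma transp_leE: "transp leE"
  unfolding leE_iff_subseq_code by (rule transpI) (rule subseq_order.trans)

lemma antisymp_leE: "antisymp leE"
  unfolding leE_iff_subseq_code by (rule antisympI) (metis code_inj subseq_order.antisym)

lemma almost_full_on_leE:
  assumes "finite A"
  shows "almost_full_on leE (words A)"
proof (rule almost_full_on_map[OF almost_full_on_subseq code_in_lists])
  show "finite (code_alphabet A)" using assms by (rule finite_code_alphabet)
  show "leE x y" if "subseq (code x) (code y)" for x y :: "'a list"
    using that leE_iff_subseq_code by blast
qed

lemma almost_full_on_downsets_leE:
  assumes "finite A"
  shows "almost_full_on (\<subseteq>) (downsets (words A) leE)"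
proof (rule almost_full_on_downsets_reflect[OF almost_full_on_downsets_subseq])
  show "finite (code_alphabet A)" using assms by (rule finite_code_alphabet)
  show "reflp subseq" by (rule reflpI) (rule subseq_order.refl)
  show "transp subseq" by (rule transpI) (rule subseq_order.trans)
  show "code x \<in> lists (code_alphabet A)" if "x \<in> words A" for x
    using that by (rule code_in_lists)
  show "leE x y" if "subseq (code x) (code y)" for x y :: "'a list"
    using that leE_iff_subseq_code by blast
qed

theorem theorem1p3:
  fixes A :: "'a set"
  assumes "finite A"
  shows "(\<not> (\<exists>f. descending_chain (words A) leE f) \<and> \<not> (\<exists>f. antichain (words A) leE f))
       \<and> (\<not> (\<exists>F. ascending_chain (upsets (words A) leE) (\<subseteq>) F)
          \<and> \<not> (\<exists>F. antichain (upsets (words A) leE) (\<subseteq>) F))"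
proof -
  have af: "almost_full_on leE (words A)" using assms by (rule almost_full_on_leE)
  show ?thesis
    using almost_full_on_imp_no_descending_chain[OF af transp_leE antisymp_leE]
      almost_full_on_imp_no_antichain[OF af]
      almost_full_on_imp_no_ascending_chain_upsets[OF af]
      almost_full_on_downsets_imp_no_antichain_upsets[OF almost_full_on_downsets_leE[OF assms]]
    by blast
qed

end
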